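(* Let $\Gamma(t)$ be a differentiable motion of nondegenerate oriented m-triangles with constant angular momentum $\mathbf\Omega$, and let $\mathfrak F(t)=(\mathbf u_1(t),\mathbf u_2(t),\mathbf n(t))$ be a continuously varying moving eigenframe. Then the functions $$g_1=\mathbf\Omega\cdot\mathbf u_1,\quad g_2=\mathbf\Omega\cdot\mathbf u_2,\quad g_3=\mathbf\Omega\cdot\mathbf n$$ satisfy $$\dot g_1=g_2\Big[\Big(\frac1{\lambda_3}-\frac1{\lambda_2}\Big)g_3+\frac12\dot\theta\cos\varphi\Big],\quad \dot g_2=g_1\Big[\Big(\frac1{\lambda_1}-\frac1{\lambda_3}\Big)g_3-\frac12\dot\theta\cos\varphi\Big],\quad \dot g_3=g_1g_2\Big(\frac1{\lambda_2}-\frac1{\lambda_1}\Big),$$ where $\lambda_1(t),\lambda_2(t),\lambda_3(t)$ are the eigenvalues of the inertia tensor of $\Gamma(t)$ associated with $\mathbf u_1,\mathbf u_2,\mathbf n$, and these depend solely on the moduli curve $\bar\Gamma(t)=(\rho(t),\varphi(t),\theta(t))$.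
   Context: Masses $m_1,m_2,m_3>0$, $m_1+m_2+m_3=1$. An oriented m-triangle is $(\mathbf X,\mathbf n)$, $\mathbf X=(\mathbf a_1,\mathbf a_2,\mathbf a_3)$, $\mathbf a_i\in\mathbb R^3$, $\sum m_i\mathbf a_i=0$, $\mathbf n$ a unit vector perpendicular to the $\mathbf a_i$; nondegenerate means the $\mathbf a_i$ span a plane. Angular momentum: $\mathbf\Omega=\sum m_i\mathbf a_i\times\dot{\mathbf a}_i$. Inertia tensor: $B_{\mathbf X}(\mathbf u,\mathbf v)=\sum m_j(\mathbf u\times\mathbf a_j)\cdot(\mathbf v\times\mathbf a_j)$. An eigenframe is a positive orthonormal frame $(\mathbf u_1,\mathbf u_2,\mathbf n)$ with $\mathbf u_1,\mathbf u_2$ in the plane of the triangle, $\mathbf u_1\times\mathbf u_2=\mathbf n$, consisting of eigenvectors of $B_{\mathbf X}$; $\lambda_i=B_{\mathbf X}(\mathbf u_i,\mathbf u_i)$ for $i=1,2$ and $\lambda_3=B_{\mathbf X}(\mathbf n,\mathbf n)=I=\sum m_i|\mathbf a_i|^2=\rho^2$; one has $\{\lambda_1,\lambda_2\}=\frac I2(1\pm\sin\varphi)$. Here $(\varphi,\theta)$ are spherical coordinates on the shape space (oriented m-triangles of size $I=1$ modulo rotation, a round sphere with the kinematic metric $\frac14(d\varphi^2+\sin^2\varphi\,d\theta^2)$): $\varphi$ is the colatitude measured from the north pole, which is the shape of the positively oriented m-triangle with $I_j=m_j|\mathbf a_j|^2=(1-m_j)/2$, and $\theta$ is the longitude, increasing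 in the positive direction of the equator (collinear shapes) as oriented by the northern hemisphere of positively oriented shapes. The moduli curve $\bar\Gamma$ is the image of $\Gamma$ modulo rotations, described by $(\rho,\varphi,\theta)$. *)

theory Defs
  imports "HOL-Analysis.Analysis"
begin

unbundle cross3_syntax

definition oriented_mtriangle ::
  "real \<Rightarrow> real \<Rightarrow> real \<Rightarrow> real^3 \<Rightarrow> real^3 \<Rightarrow> real^3 \<Rightarrow> real^3 \<Rightarrow> bool" where
  "oriented_mtriangle m1 m2 m3 a1 a2 a3 n \<longleftrightarrow>
     m1 *\<^sub>R a1 + m2 *\<^sub>R a2 + m3 *\<^sub>R a3 = 0 \<and> norm n = 1 \<and>
     n \<bullet> a1 = 0 \<and> n \<bullet> a2 = 0 \<and> n \<bullet> a3 = 0"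

definition nondegenerate :: "real^3 \<Rightarrow> real^3 \<Rightarrow> real^3 \<Rightarrow> bool" where
  "nondegenerate a1 a2 a3 \<longleftrightarrow> dim (span {a1, a2, a3}) = 2"

definition ang_mom ::
  "real \<Rightarrow> real \<Rightarrow> real \<Rightarrow> real^3 \<Rightarrow> real^3 \<Rightarrow> real^3 \<Rightarrow> real^3 \<Rightarrow> real^3 \<Rightarrow> real^3 \<Rightarrow> real^3" where
  "ang_mom m1 m2 m3 a1 a2 a3 v1 v2 v3 =
     m1 *\<^sub>R (a1 \<times> v1) + m2 *\<^sub>R (a2 \<times> v2) + m3 *\<^sub>R (a3 \<times> v3)"

definition inertia_tensor ::
  "real \<Rightarrow> real \<Rightarrow> real \<Rightarrow> real^3 \<Rightarrow> real^3 \<Rightarrow> real^3 \<Rightarrow> real^3 \<Rightarrow> real^3 \<Rightarrow> real" where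
  "inertia_tensor m1 m2 m3 a1 a2 a3 u v =
     m1 * ((u \<times> a1) \<bullet> (v \<times> a1)) + m2 * ((u \<times> a2) \<bullet> (v \<times> a2)) + m3 * ((u \<times> a3) \<bullet> (v \<times> a3))"

definition moment_of_inertia ::
  "real \<Rightarrow> real \<Rightarrow> real \<Rightarrow> real^3 \<Rightarrow> real^3 \<Rightarrow> real^3 \<Rightarrow> real" where
  "moment_of_inertia m1 m2 m3 a1 a2 a3 = m1 * (norm a1)\<^sup>2 + m2 * (norm a2)\<^sup>2 + m3 * (norm a3)\<^sup>2"

text \<open>u is an eigenvector (with eigenvalue l) of the symmetric bilinear form B,
  i.e. of the associated self-adjoint operator w.r.t. the dot product.\<close>
definition is_eigvec :: "(real^3 \<Rightarrow> real^3 \<Rightarrow> real) \<Rightarrow> real^3 \<Rightarrow> real \<Rightarrow> bool" where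
  "is_eigvec B u l \<longleftrightarrow> u \<noteq> 0 \<and> (\<forall>v. B u v = l * (u \<bullet> v))"

definition eigenframe ::
  "real \<Rightarrow> real \<Rightarrow> real \<Rightarrow> real^3 \<Rightarrow> real^3 \<Rightarrow> real^3 \<Rightarrow> real^3 \<Rightarrow> real^3 \<Rightarrow> real^3 \<Rightarrow> bool" where
  "eigenframe m1 m2 m3 a1 a2 a3 u1 u2 n \<longleftrightarrow>
     norm u1 = 1 \<and> norm u2 = 1 \<and> norm n = 1 \<and>
     u1 \<bullet> u2 = 0 \<and> u1 \<bullet> n = 0 \<and> u2 \<bullet> n = 0 \<and> u1 \<times> u2 = n \<and>
     u1 \<in> span {a1, a2, a3} \<and> u2 \<in> span {a1, a2, a3} \<and>
     (\<exists>l. is_eigvec (inertia_tensor m1 m2 m3 a1 a2 a3) u1 l) \<and>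
     (\<exists>l. is_eigvec (inertia_tensor m1 m2 m3 a1 a2 a3) u2 l) \<and>
     (\<exists>l. is_eigvec (inertia_tensor m1 m2 m3 a1 a2 a3) n l)"

text \<open>Mass-weighted Jacobi vectors
  xi = sqrt(m1 m2/(m1+m2)) (a2 - a1),  eta = sqrt((m1+m2) m3) (a3 - (m1 a1 + m2 a2)/(m1+m2)),
  so that I = |xi|^2 + |eta|^2.  The (Hopf) shape point
  S = (|xi|^2 - |eta|^2, 2 xi.eta, 2 n.(xi \<times> eta)) has |S| = I; S/I is a model of the
  shape sphere (round, kinematic metric (1/4)(d\<phi>^2 + sin^2 \<phi> d\<theta>^2)) whose third axis
  points to the north pole (positively oriented shape with I_j = (1 - m_j)/2), the equator
  being the collinear shapes.  This fixes the longitude up to an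
  additive constant (choice of the meridian \<theta> = 0), which is irrelevant for \<theta>-dot.\<close>
definition jac_xi :: "real \<Rightarrow> real \<Rightarrow> real^3 \<Rightarrow> real^3 \<Rightarrow> real^3" where
  "jac_xi m1 m2 a1 a2 = sqrt (m1 * m2 / (m1 + m2)) *\<^sub>R (a2 - a1)"

definition jac_eta :: "real \<Rightarrow> real \<Rightarrow> real \<Rightarrow> real^3 \<Rightarrow> real^3 \<Rightarrow> real^3 \<Rightarrow> real^3" where
  "jac_eta m1 m2 m3 a1 a2 a3 =
     sqrt ((m1 + m2) * m3) *\<^sub>R (a3 - (1 / (m1 + m2)) *\<^sub>R (m1 *\<^sub>R a1 + m2 *\<^sub>R a2))"

definition shape_coords ::
  "real \<Rightarrow> real \<Rightarrow> real \<Rightarrow> real^3 \<Rightarrow> real^3 \<Rightarrow> real^3 \<Rightarrow> real^3 \<Rightarrow> real \<Rightarrow> real \<Rightarrow> bool" where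
  "shape_coords m1 m2 m3 a1 a2 a3 n \<phi> \<theta> \<longleftrightarrow>
     (let xi = jac_xi m1 m2 a1 a2; eta = jac_eta m1 m2 m3 a1 a2 a3;
          I = moment_of_inertia m1 m2 m3 a1 a2 a3
      in 0 \<le> \<phi> \<and> \<phi> \<le> pi \<and>
         2 * (n \<bullet> (xi \<times> eta)) = I * cos \<phi> \<and>
         xi \<bullet> xi - eta \<bullet> eta = I * sin \<phi> * cos \<theta> \<and>
         2 * (xi \<bullet> eta) = I * sin \<phi> * sin \<theta>)"

end

theory Submission
  imports Defs
begin

unbundle cross3_syntax

(* In mass-weighted Jacobi coordinates a centred triangle is a pair of vectors X, E in its plane;
  then I = |X|^2 + |E|^2, the inertia tensor is B(u,w) = (u.w) I - (u.X)(w.X) - (u.E)(w.E) and the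
  angular momentum is X x X' + E x E'.  An eigenframe therefore diagonalises the planar form
  S(u,w) = (u.X)(w.X) + (u.E)(w.E), whose eigenvalues are lambda_2 = S(u_1,u_1) and
  lambda_1 = S(u_2,u_2), with gap I sin phi.  Off the poles the gap is nonzero and the frame is
  differentiable: n is the direction of X x E, and u_1 the direction of (S - lambda_1) applied to
  a fixed vector.  Differentiating orthonormality gives u_1' = beta u_2 - a n, u_2' = -beta u_1 - b n,
  n' = a u_1 + b u_2, hence g_1' = beta g_2 - a g_3, g_2' = -beta g_1 - b g_3, g_3' = a g_1 + b g_2
  for constant Omega.  Differentiating X.n = E.n = 0 gives a = g_2/lambda_2 and b = -g_1/lambda_1;
  differentiating S(u_1,u_2) = 0 and the longitude relation (|X|^2 - |E|^2, 2 X.E) ~ (cos theta, sin theta)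
  gives beta I = g_3 + theta' n.(X x E) = g_3 + (I/2) theta' cos phi. *)

section \<open>Differentiable curves\<close>

lemma eventually_nhds_dist_less:
  assumes "isCont f t" "e > 0"
  shows "\<forall>\<^sub>F s in nhds t. dist (f s) (f t) < e"
  using assms tendsto_nhds_iff[of f "f t" t] by (simp add: isCont_def tendsto_iff)

lemma eventually_eq_if_eventually_eq_or_neg:
  fixes f g :: "real \<Rightarrow> 'a::real_normed_vector"
  assumes "isCont f t" "isCont g t" "f t = g t" "g t \<noteq> 0"
    and "\<forall>\<^sub>F s in nhds t. f s = g s \<or> f s = - g s"
  shows "\<forall>\<^sub>F s in nhds t. f s = g s"
proof -
  have "norm (g t) > 0"
    using assms(4) by simp
  with assms(1,2) have "\<forall>\<^sub>F s in nhds t. dist (f s) (f t) < norm (g t)"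
    "\<forall>\<^sub>F s in nhds t. dist (g s) (g t) < norm (g t)"
    by (simp_all add: eventually_nhds_dist_less)
  with assms(5) show ?thesis
  proof eventually_elim
    case (elim s)
    show ?case
    proof (rule ccontr)
      assume "f s \<noteq> g s"
      with elim assms(3) have "f s - f t = - (g s + g t)"
        by simp
      with elim have "norm (g s + g t) < norm (g t)"
        by (metis dist_norm norm_minus_cancel)
      moreover have "2 * norm (g t) \<le> norm (g s + g t) + norm (g s - g t)"
        using norm_triangle_ineq4[of "g s + g t" "g s - g t"] by (simp flip: scaleR_2)
      ultimately show False
        using elim by (simp add: dist_norm)
    qed
  qed
qed

lemma differentiable_transform_nhds:
  assumes "f differentiable (at t)" "\<forall>\<^sub>F s in nhds t. f s = g s"
  shows "g differentiable (at t)"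
  using assms has_derivative_transform_eventually[of f _ t UNIV g]
  unfolding differentiable_def eventually_nhds_conv_at by blast

lemma differentiable_if_eventually_eq_or_neg:
  fixes f g :: "real \<Rightarrow> 'a::real_normed_vector"
  assumes "isCont f t" "g differentiable (at t)" "g t \<noteq> 0"
    and "\<forall>\<^sub>F s in nhds t. f s = g s \<or> f s = - g s"
  shows "f differentiable (at t)"
proof -
  have "f t = g t \<or> f t = - g t"
    using assms(4) eventually_nhds_x_imp_x by blast
  then obtain k :: real where k: "k = 1 \<or> k = -1" "f t = k *\<^sub>R g t"
    by fastforce
  have "isCont g t"
    using assms(2) by (simp add: differentiable_imp_continuous_within)
  with k assms(3,4) have "\<forall>\<^sub>F s in nhds t. f s = k *\<^sub>R g s"
    by (intro eventually_eq_if_eventually_eq_or_neg[OF assms(1)] continuous_intros)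
      (auto elim!: eventually_mono)
  then have "\<forall>\<^sub>F s in nhds t. k *\<^sub>R g s = f s"
    by (auto elim: eventually_mono)
  moreover have "(\<lambda>s. k *\<^sub>R g s) differentiable (at t)"
    using assms(2) by simp
  ultimately show ?thesis
    using differentiable_transform_nhds by blast
qed

lemma differentiable_unit_if_parallel:
  fixes f g :: "real \<Rightarrow> 'a::real_inner"
  assumes "isCont f t" "g differentiable (at t)" "g t \<noteq> 0"
    and "\<forall>\<^sub>F s in nhds t. norm (f s) = 1 \<and> (\<exists>k. g s = k *\<^sub>R f s)"
  shows "f differentiable (at t)"
proof (rule differentiable_if_eventually_eq_or_neg[OF assms(1)])
  have "isCont g t"
    using assms(2) by (simp add: differentiable_imp_continuous_within)
  then have "\<forall>\<^sub>F s in nhds t. dist (g s) (g t) < norm (g t)"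
    using assms(3) by (simp add: eventually_nhds_dist_less)
  with assms(4) show "\<forall>\<^sub>F s in nhds t. f s = sgn (g s) \<or> f s = - sgn (g s)"
  proof eventually_elim
    case (elim s)
    then obtain k where "g s = k *\<^sub>R f s" "norm (f s) = 1"
      by blast
    moreover have "k \<noteq> 0"
      using elim calculation by (auto simp: dist_norm)
    ultimately show ?case
      by (cases "k > 0") (auto simp: sgn_scaleR sgn_div_norm)
  qed
  have "(norm \<circ> g) differentiable (at t)"
    using assms(2,3) by (simp add: differentiable_chain_at)
  then show "(\<lambda>s. sgn (g s)) differentiable (at t)"
    unfolding sgn_div_norm divide_inverse_commute o_def
    using assms(2,3) by (auto intro!: differentiable_scaleR differentiable_inverse)
  show "sgn (g t) \<noteq> 0"
    using assms(3) by (simp add: sgn_zero_iff)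
qed

lemma differentiable_if_square_differentiable:
  fixes h :: "real \<Rightarrow> real"
  assumes "isCont h t" "h t \<noteq> 0" "(\<lambda>s. (h s)\<^sup>2) differentiable (at t)"
  shows "h differentiable (at t)"
proof (rule differentiable_if_eventually_eq_or_neg[OF assms(1)])
  show "\<forall>\<^sub>F s in nhds t. h s = sqrt ((h s)\<^sup>2) \<or> h s = - sqrt ((h s)\<^sup>2)"
    by (auto intro!: always_eventually)
  have "sqrt differentiable (at ((h t)\<^sup>2))"
    using DERIV_real_sqrt[of "(h t)\<^sup>2"] assms(2)
    by (auto simp: has_field_derivative_def intro: differentiableI)
  with assms(3) have "(sqrt \<circ> (\<lambda>s. (h s)\<^sup>2)) differentiable (at t)"
    by (rule differentiable_chain_at)
  then show "(\<lambda>s. sqrt ((h s)\<^sup>2)) differentiable (at t)"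
    by (simp add: o_def)
  show "sqrt ((h t)\<^sup>2) \<noteq> 0"
    using assms(2) by simp
qed

lemma has_real_derivative_eventually_const:
  assumes "(f has_real_derivative f') (at t)" "\<forall>\<^sub>F s in nhds t. f s = c"
  shows "f' = 0"
proof -
  have "((\<lambda>s. c) has_real_derivative f') (at t)"
    using assms DERIV_cong_ev[of t t f "\<lambda>s. c" f' f'] eventually_nhds_x_imp_x by fastforce
  then show ?thesis
    using DERIV_const DERIV_unique by blast
qed

lemma has_real_derivative_inner:
  fixes f g :: "real \<Rightarrow> 'a::real_inner"
  assumes "(f has_vector_derivative f') (at t)" "(g has_vector_derivative g') (at t)"
  shows "((\<lambda>s. f s \<bullet> g s) has_real_derivative f t \<bullet> g' + f' \<bullet> g t) (at t)"
  using bounded_bilinear.has_vector_derivative[OF bounded_bilinear_inner assms]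
  by (simp add: has_real_derivative_iff_has_vector_derivative)

lemma inner_derivative_eventually_const:
  fixes f g :: "real \<Rightarrow> 'a::real_inner"
  assumes "(f has_vector_derivative f') (at t)" "(g has_vector_derivative g') (at t)"
    and "\<forall>\<^sub>F s in nhds t. f s \<bullet> g s = c"
  shows "f t \<bullet> g' + f' \<bullet> g t = 0"
  using has_real_derivative_inner[OF assms(1,2)] assms(3) by (rule has_real_derivative_eventually_const)

lemma has_vector_derivative_cross:
  fixes f g :: "real \<Rightarrow> real^3"
  assumes "(f has_vector_derivative f') (at t)" "(g has_vector_derivative g') (at t)"
  shows "((\<lambda>s. f s \<times> g s) has_vector_derivative f t \<times> g' + f' \<times> g t) (at t)"
  using bilinear_cross bilinear_conv_bounded_bilinear bounded_bilinear.has_vector_derivative assms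
  by blast

lemma polar_angle_derivative:
  fixes Z1 Z2 \<theta> :: "real \<Rightarrow> real"
  assumes "(Z1 has_real_derivative Z1') (at t)" "(Z2 has_real_derivative Z2') (at t)"
    and "(\<theta> has_real_derivative \<theta>') (at t)"
    and "\<forall>\<^sub>F s in nhds t. Z1 s * sin (\<theta> s) = Z2 s * cos (\<theta> s)"
  shows "Z1 t * Z2' - Z2 t * Z1' = ((Z1 t)\<^sup>2 + (Z2 t)\<^sup>2) * \<theta>'"
proof -
  have "((\<lambda>s. Z1 s * sin (\<theta> s) - Z2 s * cos (\<theta> s)) has_real_derivative
      Z1' * sin (\<theta> t) + Z1 t * (cos (\<theta> t) * \<theta>') - (Z2' * cos (\<theta> t) + Z2 t * (- sin (\<theta> t) * \<theta>'))) (at t)"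
    using assms(1-3) by (auto intro!: derivative_eq_intros)
  moreover have "\<forall>\<^sub>F s in nhds t. Z1 s * sin (\<theta> s) - Z2 s * cos (\<theta> s) = 0"
    using assms(4) by (auto elim: eventually_mono)
  ultimately have rate: "Z1' * sin (\<theta> t) + Z1 t * (cos (\<theta> t) * \<theta>')
      - (Z2' * cos (\<theta> t) + Z2 t * (- sin (\<theta> t) * \<theta>')) = 0"
    by (rule has_real_derivative_eventually_const)
  define R where "R = Z1 t * cos (\<theta> t) + Z2 t * sin (\<theta> t)"
  have "Z1 t * sin (\<theta> t) = Z2 t * cos (\<theta> t)"
    using assms(4) eventually_nhds_x_imp_x by blast
  then have "Z1 t = R * cos (\<theta> t)" "Z2 t = R * sin (\<theta> t)"
    unfolding R_def using sin_cos_squared_add[of "\<theta> t"] by algebra+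
  with rate show ?thesis
    using sin_cos_squared_add[of "\<theta> t"] by algebra
qed

section \<open>Positive orthonormal frames\<close>

lemma cross_inner_cross: "((a::real^3) \<times> b) \<bullet> (c \<times> d) = (a \<bullet> c) * (b \<bullet> d) - (a \<bullet> d) * (b \<bullet> c)"
  by (simp add: cross3_simps forall_3)

lemma cross_cross_left: "((a::real^3) \<times> b) \<times> c = (a \<bullet> c) *\<^sub>R b - (b \<bullet> c) *\<^sub>R a"
  by (simp add: cross3_simps forall_3)

lemma cross_cross_right: "(a::real^3) \<times> (b \<times> c) = (a \<bullet> c) *\<^sub>R b - (a \<bullet> b) *\<^sub>R c"
  by (simp add: cross3_simps forall_3)

definition pos_orthonormal_frame :: "real^3 \<Rightarrow> real^3 \<Rightarrow> real^3 \<Rightarrow> bool" where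
  "pos_orthonormal_frame u1 u2 n \<longleftrightarrow> norm u1 = 1 \<and> norm u2 = 1 \<and> u1 \<bullet> u2 = 0 \<and> u1 \<times> u2 = n"

definition second_moment :: "real^3 \<Rightarrow> real^3 \<Rightarrow> real^3 \<Rightarrow> real" where
  "second_moment X E w = (X \<bullet> w)\<^sup>2 + (E \<bullet> w)\<^sup>2"

context
  fixes u1 u2 n :: "real^3"
  assumes frame: "pos_orthonormal_frame u1 u2 n"
begin

lemma frame_inner:
  "u1 \<bullet> u1 = 1" "u2 \<bullet> u2 = 1" "n \<bullet> n = 1"
  "u1 \<bullet> u2 = 0" "u1 \<bullet> n = 0" "u2 \<bullet> n = 0" "u2 \<bullet> u1 = 0" "n \<bullet> u1 = 0" "n \<bullet> u2 = 0"
  using frame norm_cross_dot[of u1 u2]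
  by (auto simp: pos_orthonormal_frame_def dot_cross_self inner_commute
      simp flip: power2_norm_eq_inner)

lemma frame_cross: "n \<times> u1 = u2" "u2 \<times> n = u1"
  using frame frame_inner
  by (auto simp: pos_orthonormal_frame_def cross_cross_left cross_cross_right inner_commute)

lemma frame_expansion: "v = (v \<bullet> u1) *\<^sub>R u1 + (v \<bullet> u2) *\<^sub>R u2 + (v \<bullet> n) *\<^sub>R n"
proof -
  define d where "d = v - ((v \<bullet> u1) *\<^sub>R u1 + (v \<bullet> u2) *\<^sub>R u2 + (v \<bullet> n) *\<^sub>R n)"
  have "u1 \<bullet> d = 0" "u2 \<bullet> d = 0" "n \<bullet> d = 0"
    using frame_inner by (simp_all add: d_def algebra_simps inner_commute)
  moreover have "n = u1 \<times> u2"
    using frame by (simp add: pos_orthonormal_frame_def)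
  ultimately have "n \<times> d = 0"
    by (simp add: cross_cross_left inner_commute)
  then have "d \<bullet> d = 0"
    using cross_inner_cross[of n d n d] frame_inner \<open>n \<bullet> d = 0\<close> by simp
  then show ?thesis
    by (simp add: d_def)
qed

lemma frame_inner_coords: "v \<bullet> w = (v \<bullet> u1) * (w \<bullet> u1) + (v \<bullet> u2) * (w \<bullet> u2) + (v \<bullet> n) * (w \<bullet> n)"
  by (subst frame_expansion[of v]) (simp add: inner_add_left inner_add_right inner_commute)

lemma frame_cross_coords:
  "(v \<times> w) \<bullet> u1 = (v \<bullet> u2) * (w \<bullet> n) - (v \<bullet> n) * (w \<bullet> u2)"
  "(v \<times> w) \<bullet> u2 = (v \<bullet> n) * (w \<bullet> u1) - (v \<bullet> u1) * (w \<bullet> n)"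
  "(v \<times> w) \<bullet> n = (v \<bullet> u1) * (w \<bullet> u2) - (v \<bullet> u2) * (w \<bullet> u1)"
  using cross_inner_cross[of v w u2 n] cross_inner_cross[of v w n u1] cross_inner_cross[of v w u1 u2]
    frame frame_cross by (simp_all add: pos_orthonormal_frame_def inner_commute)

context
  fixes X E :: "real^3"
  assumes X_normal: "X \<bullet> n = 0" and E_normal: "E \<bullet> n = 0"
begin

lemma planar_cross: "X \<times> E = (n \<bullet> (X \<times> E)) *\<^sub>R n"
  using frame_expansion[of "X \<times> E"] frame_cross_coords[of X E] X_normal E_normal
  by (simp add: inner_commute)

lemma planar_inner_coords:
  "X \<bullet> X = (X \<bullet> u1)\<^sup>2 + (X \<bullet> u2)\<^sup>2" "E \<bullet> E = (E \<bullet> u1)\<^sup>2 + (E \<bullet> u2)\<^sup>2"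
  "X \<bullet> E = (X \<bullet> u1) * (E \<bullet> u1) + (X \<bullet> u2) * (E \<bullet> u2)"
  using frame_inner_coords[of X X] frame_inner_coords[of E E] frame_inner_coords[of X E] X_normal E_normal
  by (simp_all add: power2_eq_square)

lemma planar_moment_sum: "X \<bullet> X + E \<bullet> E = second_moment X E u1 + second_moment X E u2"
  by (simp add: planar_inner_coords second_moment_def)

context
  assumes principal: "(X \<bullet> u1) * (X \<bullet> u2) + (E \<bullet> u1) * (E \<bullet> u2) = 0"
begin

lemma planar_triple_sq: "(n \<bullet> (X \<times> E))\<^sup>2 = second_moment X E u1 * second_moment X E u2"
proof -
  have "n \<bullet> (X \<times> E) = (X \<bullet> u1) * (E \<bullet> u2) - (X \<bullet> u2) * (E \<bullet> u1)"
    using frame_cross_coords(3)[of X E] by (simp add: inner_commute)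
  with principal show ?thesis
    unfolding second_moment_def by algebra
qed

lemma planar_moment_gap_sq:
  "(second_moment X E u1 - second_moment X E u2)\<^sup>2 = (X \<bullet> X - E \<bullet> E)\<^sup>2 + (2 * (X \<bullet> E))\<^sup>2"
  using principal unfolding planar_inner_coords second_moment_def by algebra

lemma planar_moment_operator:
  "(X \<bullet> c) *\<^sub>R X + (E \<bullet> c) *\<^sub>R E - second_moment X E u2 *\<^sub>R (c - (n \<bullet> c) *\<^sub>R n)
    = ((u1 \<bullet> c) * (second_moment X E u1 - second_moment X E u2)) *\<^sub>R u1"
proof -
  define x1 y1 x2 y2 where "x1 = X \<bullet> u1" "y1 = X \<bullet> u2" "x2 = E \<bullet> u1" "y2 = E \<bullet> u2"
  define c1 c2 where "c1 = u1 \<bullet> c" "c2 = u2 \<bullet> c"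
  have "c - (n \<bullet> c) *\<^sub>R n = c1 *\<^sub>R u1 + c2 *\<^sub>R u2"
    using frame_expansion[of c] by (simp add: c1_c2_def inner_commute algebra_simps)
  moreover have "X = x1 *\<^sub>R u1 + y1 *\<^sub>R u2" "E = x2 *\<^sub>R u1 + y2 *\<^sub>R u2"
    using frame_expansion[of X] frame_expansion[of E] X_normal E_normal
    by (simp_all add: x1_y1_x2_y2_def)
  moreover have "X \<bullet> c = x1 * c1 + y1 * c2" "E \<bullet> c = x2 * c1 + y2 * c2"
    using frame_inner_coords[of X c] frame_inner_coords[of E c] X_normal E_normal
    by (simp_all add: x1_y1_x2_y2_def c1_c2_def inner_commute)
  moreover have "second_moment X E u1 = x1\<^sup>2 + x2\<^sup>2" "second_moment X E u2 = y1\<^sup>2 + y2\<^sup>2"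
    by (simp_all add: x1_y1_x2_y2_def second_moment_def)
  ultimately have "(X \<bullet> c) *\<^sub>R X + (E \<bullet> c) *\<^sub>R E - second_moment X E u2 *\<^sub>R (c - (n \<bullet> c) *\<^sub>R n)
    = (c1 * (x1\<^sup>2 + x2\<^sup>2 - (y1\<^sup>2 + y2\<^sup>2)) + c2 * (x1 * y1 + x2 * y2)) *\<^sub>R u1
      + (c1 * (x1 * y1 + x2 * y2)) *\<^sub>R u2"
    by (simp add: vec_eq_iff algebra_simps power2_eq_square)
  also have "\<dots> = ((u1 \<bullet> c) * (second_moment X E u1 - second_moment X E u2)) *\<^sub>R u1"
    using principal by (simp add: x1_y1_x2_y2_def c1_c2_def second_moment_def)
  finally show ?thesis .
qed

end

end

end

lemma pos_orthonormal_frame_derivative: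
  assumes frame: "\<forall>\<^sub>F s in nhds t. pos_orthonormal_frame (u1 s) (u2 s) (n s)"
    and u1': "(u1 has_vector_derivative u1') (at t)"
    and u2': "(u2 has_vector_derivative u2') (at t)"
    and n': "(n has_vector_derivative n') (at t)"
  shows "u1' = (u1' \<bullet> u2 t) *\<^sub>R u2 t - (n' \<bullet> u1 t) *\<^sub>R n t"
    "u2' = - (u1' \<bullet> u2 t) *\<^sub>R u1 t - (n' \<bullet> u2 t) *\<^sub>R n t"
    "n' = (n' \<bullet> u1 t) *\<^sub>R u1 t + (n' \<bullet> u2 t) *\<^sub>R u2 t"
proof -
  have "\<forall>\<^sub>F s in nhds t. u1 s \<bullet> u1 s = 1" "\<forall>\<^sub>F s in nhds t. u2 s \<bullet> u2 s = 1"
    "\<forall>\<^sub>F s in nhds t. n s \<bullet> n s = 1" "\<forall>\<^sub>F s in nhds t. u1 s \<bullet> u2 s = 0"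
    "\<forall>\<^sub>F s in nhds t. u1 s \<bullet> n s = 0" "\<forall>\<^sub>F s in nhds t. u2 s \<bullet> n s = 0"
    using frame by (auto elim!: eventually_mono simp: frame_inner)
  note skew = inner_derivative_eventually_const[rotated 2, OF this(1) u1' u1']
    inner_derivative_eventually_const[rotated 2, OF this(2) u2' u2']
    inner_derivative_eventually_const[rotated 2, OF this(3) n' n']
    inner_derivative_eventually_const[rotated 2, OF this(4) u1' u2']
    inner_derivative_eventually_const[rotated 2, OF this(5) u1' n']
    inner_derivative_eventually_const[rotated 2, OF this(6) u2' n']
  have "pos_orthonormal_frame (u1 t) (u2 t) (n t)"
    using frame eventually_nhds_x_imp_x by blast
  note expand = frame_expansion[OF this]
  show "u1' = (u1' \<bullet> u2 t) *\<^sub>R u2 t - (n' \<bullet> u1 t) *\<^sub>R n t"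
    using expand[of u1'] skew by (simp add: inner_commute add_eq_0_iff)
  show "u2' = - (u1' \<bullet> u2 t) *\<^sub>R u1 t - (n' \<bullet> u2 t) *\<^sub>R n t"
    using expand[of u2'] skew by (simp add: inner_commute add_eq_0_iff)
  show "n' = (n' \<bullet> u1 t) *\<^sub>R u1 t + (n' \<bullet> u2 t) *\<^sub>R u2 t"
    using expand[of n'] skew by (simp add: inner_commute add_eq_0_iff)
qed

lemma frame_components_has_real_derivative:
  assumes "(u1 has_vector_derivative \<beta> *\<^sub>R u2 t - a *\<^sub>R n t) (at t)"
    and "(u2 has_vector_derivative - \<beta> *\<^sub>R u1 t - b *\<^sub>R n t) (at t)"
    and "(n has_vector_derivative a *\<^sub>R u1 t + b *\<^sub>R u2 t) (at t)"
  shows "((\<lambda>s. w \<bullet> u1 s) has_real_derivative \<beta> * (w \<bullet> u2 t) - a * (w \<bullet> n t)) (at t)"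
    "((\<lambda>s. w \<bullet> u2 s) has_real_derivative - (\<beta> * (w \<bullet> u1 t)) - b * (w \<bullet> n t)) (at t)"
    "((\<lambda>s. w \<bullet> n s) has_real_derivative a * (w \<bullet> u1 t) + b * (w \<bullet> u2 t)) (at t)"
  using has_real_derivative_inner[OF has_vector_derivative_const assms(1), of w]
    has_real_derivative_inner[OF has_vector_derivative_const assms(2), of w]
    has_real_derivative_inner[OF has_vector_derivative_const assms(3), of w]
  by (simp_all add: inner_add_right inner_diff_right)

section \<open>Motion of two vectors along a principal frame\<close>

lemma frame_rates_algebra:
  fixes x1 y1 x2 y2 p1 q1 r1 p2 q2 r2 a b \<beta> \<theta>' :: real
  assumes principal: "x1 * y1 + x2 * y2 = 0"
    and pos: "y1\<^sup>2 + y2\<^sup>2 > 0" "x1\<^sup>2 + x2\<^sup>2 > 0" and distinct: "x1\<^sup>2 + x2\<^sup>2 \<noteq> y1\<^sup>2 + y2\<^sup>2"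
    and normal_rate: "x1 * a + y1 * b + r1 = 0" "x2 * a + y2 * b + r2 = 0"
    and principal_rate:
      "(y1 * \<beta> + p1) * y1 + x1 * (q1 - x1 * \<beta>) + ((y2 * \<beta> + p2) * y2 + x2 * (q2 - x2 * \<beta>)) = 0"
    and polar_rate: "(x1\<^sup>2 + y1\<^sup>2 - (x2\<^sup>2 + y2\<^sup>2)) * (2 * (x1 * p2 + y1 * q2 + (p1 * x2 + q1 * y2)))
        - 2 * (x1 * x2 + y1 * y2) * (2 * (x1 * p1 + y1 * q1) - 2 * (x2 * p2 + y2 * q2))
      = ((x1\<^sup>2 + y1\<^sup>2 - (x2\<^sup>2 + y2\<^sup>2))\<^sup>2 + (2 * (x1 * x2 + y1 * y2))\<^sup>2) * \<theta>'"
  defines "g1 \<equiv> y1 * r1 + y2 * r2" and "g2 \<equiv> - (x1 * r1 + x2 * r2)"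
    and "g3 \<equiv> x1 * q1 - y1 * p1 + (x2 * q2 - y2 * p2)"
    and "lam1 \<equiv> y1\<^sup>2 + y2\<^sup>2" and "lam2 \<equiv> x1\<^sup>2 + x2\<^sup>2" and "I \<equiv> x1\<^sup>2 + x2\<^sup>2 + (y1\<^sup>2 + y2\<^sup>2)"
    and "D \<equiv> x1 * y2 - y1 * x2"
  shows "\<beta> * g2 - a * g3 = g2 * ((1 / I - 1 / lam2) * g3 + \<theta>' * D / I)"
    "- (\<beta> * g1) - b * g3 = g1 * ((1 / lam1 - 1 / I) * g3 - \<theta>' * D / I)"
    "a * g1 + b * g2 = g1 * g2 * (1 / lam2 - 1 / lam1)"
proof -
  have lam_pos: "lam1 > 0" "lam2 > 0" "I > 0"
    using pos by (simp_all add: lam1_def lam2_def I_def)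
  have "a * lam2 = g2" "b * lam1 = - g1"
    using principal normal_rate unfolding g1_def g2_def lam1_def lam2_def by algebra+
  then have a: "a = g2 / lam2" and b: "b = - g1 / lam1"
    using lam_pos by (simp_all add: field_simps)
  have "lam2 - lam1 \<noteq> 0"
    using distinct by (simp add: lam1_def lam2_def)
  \<comment> \<open>\<open>principal_rate\<close> says \<open>\<beta> (lam2 - lam1) = y1 p1 + x1 q1 + y2 p2 + x2 q2\<close>, and the radius in
    \<open>polar_rate\<close> is \<open>(lam2 - lam1)\<^sup>2\<close>\<close>
  moreover have "(g3 - I * \<beta> + D * \<theta>') * (lam2 - lam1)\<^sup>2 = 0"
    using principal principal_rate polar_rate
    unfolding g3_def I_def D_def lam1_def lam2_def by algebra
  ultimately have "g3 - I * \<beta> + D * \<theta>' = 0"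
    by simp
  then have \<beta>: "\<beta> = (g3 + D * \<theta>') / I"
    using lam_pos by (simp add: field_simps)
  show "\<beta> * g2 - a * g3 = g2 * ((1 / I - 1 / lam2) * g3 + \<theta>' * D / I)"
    "- (\<beta> * g1) - b * g3 = g1 * ((1 / lam1 - 1 / I) * g3 - \<theta>' * D / I)"
    "a * g1 + b * g2 = g1 * g2 * (1 / lam2 - 1 / lam1)"
    using lam_pos unfolding a b \<beta> by (simp_all add: field_simps)
qed

locale principal_frame_motion =
  fixes J :: "real set" and X E X' E' u1 u2 n :: "real \<Rightarrow> real^3"
  assumes open_J: "open J"
    and X_deriv: "\<And>s. s \<in> J \<Longrightarrow> (X has_vector_derivative X' s) (at s)"
    and E_deriv: "\<And>s. s \<in> J \<Longrightarrow> (E has_vector_derivative E' s) (at s)"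
    and frame: "\<And>s. s \<in> J \<Longrightarrow> pos_orthonormal_frame (u1 s) (u2 s) (n s)"
    and u1_cont: "continuous_on J u1" and n_cont: "continuous_on J n"
    and X_normal: "\<And>s. s \<in> J \<Longrightarrow> X s \<bullet> n s = 0"
    and E_normal: "\<And>s. s \<in> J \<Longrightarrow> E s \<bullet> n s = 0"
    and principal: "\<And>s. s \<in> J \<Longrightarrow> (X s \<bullet> u1 s) * (X s \<bullet> u2 s) + (E s \<bullet> u1 s) * (E s \<bullet> u2 s) = 0"
    and moment_pos: "\<And>s. s \<in> J \<Longrightarrow> 0 < second_moment (X s) (E s) (u1 s)"
      "\<And>s. s \<in> J \<Longrightarrow> 0 < second_moment (X s) (E s) (u2 s)"
    and moments_distinct:
      "\<And>s. s \<in> J \<Longrightarrow> second_moment (X s) (E s) (u1 s) \<noteq> second_moment (X s) (E s) (u2 s)"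
begin

lemma eventually_in_J: "t \<in> J \<Longrightarrow> \<forall>\<^sub>F s in nhds t. s \<in> J"
  using open_J by (rule eventually_nhds_in_open)

lemma X_differentiable: "t \<in> J \<Longrightarrow> X differentiable (at t)"
  and E_differentiable: "t \<in> J \<Longrightarrow> E differentiable (at t)"
  using X_deriv E_deriv by (blast intro: differentiableI_vector)+

lemma X_isCont: "t \<in> J \<Longrightarrow> isCont X t" and E_isCont: "t \<in> J \<Longrightarrow> isCont E t"
  using X_differentiable E_differentiable differentiable_imp_continuous_within by blast+

lemma u2_eq_cross: "s \<in> J \<Longrightarrow> u2 s = n s \<times> u1 s"
  using frame_cross(1)[OF frame] by simp

lemma frame_isCont: "t \<in> J \<Longrightarrow> isCont u1 t" "t \<in> J \<Longrightarrow> isCont u2 t" "t \<in> J \<Longrightarrow> isCont n t"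
proof -
  have "continuous_on J u2"
    using continuous_on_cross[OF n_cont u1_cont] by (rule continuous_on_eq) (simp add: u2_eq_cross)
  then show "t \<in> J \<Longrightarrow> isCont u1 t" "t \<in> J \<Longrightarrow> isCont u2 t" "t \<in> J \<Longrightarrow> isCont n t"
    using u1_cont n_cont continuous_on_eq_continuous_at[OF open_J] by blast+
qed

lemma n_differentiable:
  assumes "t \<in> J"
  shows "n differentiable (at t)"
proof (rule differentiable_unit_if_parallel)
  show "isCont n t"
    using frame_isCont assms by blast
  show "(\<lambda>s. X s \<times> E s) differentiable (at t)"
    using has_vector_derivative_cross[OF X_deriv E_deriv] assms by (blast intro: differentiableI_vector)
  have "(n t \<bullet> (X t \<times> E t))\<^sup>2 \<noteq> 0"
    using planar_triple_sq[OF frame X_normal E_normal principal, OF assms assms assms assms]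
      moment_pos[OF assms] by simp
  then show "X t \<times> E t \<noteq> 0"
    by auto
  show "\<forall>\<^sub>F s in nhds t. norm (n s) = 1 \<and> (\<exists>k. X s \<times> E s = k *\<^sub>R n s)"
    using eventually_in_J[OF assms]
  proof eventually_elim
    case (elim s)
    then show ?case
      using frame_inner(3)[OF frame] planar_cross[OF frame X_normal E_normal] by (auto simp: norm_eq_1)
  qed
qed

lemma moment_difference_differentiable:
  assumes "t \<in> J"
  shows "(\<lambda>s. second_moment (X s) (E s) (u1 s) - second_moment (X s) (E s) (u2 s)) differentiable (at t)"
proof (rule differentiable_if_square_differentiable)
  show "isCont (\<lambda>s. second_moment (X s) (E s) (u1 s) - second_moment (X s) (E s) (u2 s)) t"
    unfolding second_moment_def using assms X_isCont E_isCont frame_isCont by (intro continuous_intros)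
  show "second_moment (X t) (E t) (u1 t) - second_moment (X t) (E t) (u2 t) \<noteq> 0"
    using moments_distinct[OF assms] by simp
  have "(\<lambda>s. (X s \<bullet> X s - E s \<bullet> E s)\<^sup>2 + (2 * (X s \<bullet> E s))\<^sup>2) differentiable (at t)"
    using X_differentiable[OF assms] E_differentiable[OF assms] by (intro derivative_intros) auto
  moreover have "\<forall>\<^sub>F s in nhds t. (X s \<bullet> X s - E s \<bullet> E s)\<^sup>2 + (2 * (X s \<bullet> E s))\<^sup>2
      = (second_moment (X s) (E s) (u1 s) - second_moment (X s) (E s) (u2 s))\<^sup>2"
    using eventually_in_J[OF assms]
    by eventually_elim (simp add: planar_moment_gap_sq[OF frame X_normal E_normal principal])
  ultimately show "(\<lambda>s. (second_moment (X s) (E s) (u1 s) - second_moment (X s) (E s) (u2 s))\<^sup>2)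
      differentiable (at t)"
    by (rule differentiable_transform_nhds)
qed

lemma u1_differentiable:
  assumes "t \<in> J"
  shows "u1 differentiable (at t)"
proof -
  define gap where "gap s = second_moment (X s) (E s) (u1 s) - second_moment (X s) (E s) (u2 s)" for s
  define c where "c = u1 t"
  \<comment> \<open>\<open>v s\<close> applies to \<open>c\<close> the planar form minus its eigenvalue \<open>second_moment (X s) (E s) (u2 s)\<close>,
    written through \<open>gap\<close> so that it is visibly differentiable\<close>
  define v where "v s = (X s \<bullet> c) *\<^sub>R X s + (E s \<bullet> c) *\<^sub>R E s
      - ((X s \<bullet> X s + E s \<bullet> E s - gap s) / 2) *\<^sub>R (c - (n s \<bullet> c) *\<^sub>R n s)" for s
  have v_parallel: "v s = ((u1 s \<bullet> c) * gap s) *\<^sub>R u1 s" if "s \<in> J" for s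
    using planar_moment_operator[OF frame X_normal E_normal principal, OF that that that that, of c]
      planar_moment_sum[OF frame X_normal E_normal, OF that that that]
    by (simp add: v_def gap_def)
  show ?thesis
  proof (rule differentiable_unit_if_parallel)
    show "isCont u1 t"
      using frame_isCont assms by blast
    show "v differentiable (at t)"
      unfolding v_def using X_differentiable[OF assms] E_differentiable[OF assms] n_differentiable[OF assms]
        moment_difference_differentiable[OF assms, folded gap_def]
      by (intro derivative_intros) auto
    show "v t \<noteq> 0"
      using v_parallel[OF assms] moments_distinct[OF assms] frame_inner(1)[OF frame[OF assms]]
      by (auto simp: c_def gap_def)
    show "\<forall>\<^sub>F s in nhds t. norm (u1 s) = 1 \<and> (\<exists>k. v s = k *\<^sub>R u1 s)"
      using eventually_in_J[OF assms]
      by eventually_elim (use frame v_parallel in \<open>auto simp: pos_orthonormal_frame_def\<close>)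
  qed
qed

lemma frame_angular_velocity:
  assumes "t \<in> J"
  obtains a b \<beta> where "(u1 has_vector_derivative \<beta> *\<^sub>R u2 t - a *\<^sub>R n t) (at t)"
    "(u2 has_vector_derivative - \<beta> *\<^sub>R u1 t - b *\<^sub>R n t) (at t)"
    "(n has_vector_derivative a *\<^sub>R u1 t + b *\<^sub>R u2 t) (at t)"
proof -
  obtain u1' n' where u1': "(u1 has_vector_derivative u1') (at t)" and n': "(n has_vector_derivative n') (at t)"
    using u1_differentiable[OF assms] n_differentiable[OF assms] vector_derivative_works by blast
  define u2' where "u2' = n t \<times> u1' + n' \<times> u1 t"
  have "((\<lambda>s. n s \<times> u1 s) has_vector_derivative u2') (at t)"
    unfolding u2'_def by (rule has_vector_derivative_cross[OF n' u1'])
  then have u2': "(u2 has_vector_derivative u2') (at t)"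
    by (rule has_vector_derivative_transform_within_open[OF _ open_J assms]) (simp add: u2_eq_cross)
  have "\<forall>\<^sub>F s in nhds t. pos_orthonormal_frame (u1 s) (u2 s) (n s)"
    using eventually_in_J[OF assms] by (auto elim!: eventually_mono simp: frame)
  note frame_rates = pos_orthonormal_frame_derivative[OF this u1' u2' n']
  define a b \<beta> where "a = n' \<bullet> u1 t" "b = n' \<bullet> u2 t" "\<beta> = u1' \<bullet> u2 t"
  have "u1' = \<beta> *\<^sub>R u2 t - a *\<^sub>R n t" "u2' = - \<beta> *\<^sub>R u1 t - b *\<^sub>R n t"
    "n' = a *\<^sub>R u1 t + b *\<^sub>R u2 t"
    using frame_rates by (simp_all add: a_b_\<beta>_def)
  then show ?thesis
    using u1' u2' n' that by simp
qed

lemma constraint_rates: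
  assumes t: "t \<in> J"
    and u1': "(u1 has_vector_derivative \<beta> *\<^sub>R u2 t - a *\<^sub>R n t) (at t)"
    and u2': "(u2 has_vector_derivative - \<beta> *\<^sub>R u1 t - b *\<^sub>R n t) (at t)"
    and n': "(n has_vector_derivative a *\<^sub>R u1 t + b *\<^sub>R u2 t) (at t)"
  shows "(X t \<bullet> u1 t) * a + (X t \<bullet> u2 t) * b + X' t \<bullet> n t = 0"
    "(E t \<bullet> u1 t) * a + (E t \<bullet> u2 t) * b + E' t \<bullet> n t = 0"
    "((X t \<bullet> u2 t) * \<beta> + X' t \<bullet> u1 t) * (X t \<bullet> u2 t) + (X t \<bullet> u1 t) * (X' t \<bullet> u2 t - (X t \<bullet> u1 t) * \<beta>)
      + (((E t \<bullet> u2 t) * \<beta> + E' t \<bullet> u1 t) * (E t \<bullet> u2 t)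
        + (E t \<bullet> u1 t) * (E' t \<bullet> u2 t - (E t \<bullet> u1 t) * \<beta>)) = 0"
proof -
  note X' = X_deriv[OF t] and E' = E_deriv[OF t]
  have "\<forall>\<^sub>F s in nhds t. X s \<bullet> n s = 0" "\<forall>\<^sub>F s in nhds t. E s \<bullet> n s = 0"
    using eventually_in_J[OF t] by (auto elim!: eventually_mono simp: X_normal E_normal)
  from inner_derivative_eventually_const[OF X' n' this(1)] inner_derivative_eventually_const[OF E' n' this(2)]
  show "(X t \<bullet> u1 t) * a + (X t \<bullet> u2 t) * b + X' t \<bullet> n t = 0"
    "(E t \<bullet> u1 t) * a + (E t \<bullet> u2 t) * b + E' t \<bullet> n t = 0"
    by (simp_all add: inner_add_right algebra_simps)
  have "((\<lambda>s. (X s \<bullet> u1 s) * (X s \<bullet> u2 s) + (E s \<bullet> u1 s) * (E s \<bullet> u2 s)) has_real_derivative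
      ((X t \<bullet> u2 t) * \<beta> + X' t \<bullet> u1 t) * (X t \<bullet> u2 t) + (X t \<bullet> u1 t) * (X' t \<bullet> u2 t - (X t \<bullet> u1 t) * \<beta>)
      + (((E t \<bullet> u2 t) * \<beta> + E' t \<bullet> u1 t) * (E t \<bullet> u2 t)
        + (E t \<bullet> u1 t) * (E' t \<bullet> u2 t - (E t \<bullet> u1 t) * \<beta>))) (at t)"
    using has_real_derivative_inner[OF X' u1'] has_real_derivative_inner[OF X' u2']
      has_real_derivative_inner[OF E' u1'] has_real_derivative_inner[OF E' u2'] X_normal[OF t] E_normal[OF t]
    by (auto intro!: derivative_eq_intros simp: inner_diff_right inner_add_right algebra_simps)
  moreover have "\<forall>\<^sub>F s in nhds t. (X s \<bullet> u1 s) * (X s \<bullet> u2 s) + (E s \<bullet> u1 s) * (E s \<bullet> u2 s) = 0"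
    using eventually_in_J[OF t] by (auto elim!: eventually_mono simp: principal)
  ultimately show "((X t \<bullet> u2 t) * \<beta> + X' t \<bullet> u1 t) * (X t \<bullet> u2 t) + (X t \<bullet> u1 t) * (X' t \<bullet> u2 t - (X t \<bullet> u1 t) * \<beta>)
      + (((E t \<bullet> u2 t) * \<beta> + E' t \<bullet> u1 t) * (E t \<bullet> u2 t)
        + (E t \<bullet> u1 t) * (E' t \<bullet> u2 t - (E t \<bullet> u1 t) * \<beta>)) = 0"
    by (rule has_real_derivative_eventually_const)
qed

lemma polar_rate:
  assumes t: "t \<in> J" and \<theta>': "(\<theta> has_real_derivative \<theta>') (at t)"
    and polar: "\<And>s. s \<in> J \<Longrightarrow> (X s \<bullet> X s - E s \<bullet> E s) * sin (\<theta> s) = 2 * (X s \<bullet> E s) * cos (\<theta> s)"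
  shows "(X t \<bullet> X t - E t \<bullet> E t) * (2 * (X t \<bullet> E' t + X' t \<bullet> E t))
      - 2 * (X t \<bullet> E t) * (X t \<bullet> X' t + X' t \<bullet> X t - (E t \<bullet> E' t + E' t \<bullet> E t))
    = ((X t \<bullet> X t - E t \<bullet> E t)\<^sup>2 + (2 * (X t \<bullet> E t))\<^sup>2) * \<theta>'"
proof (rule polar_angle_derivative[OF _ _ \<theta>'])
  note X' = X_deriv[OF t] and E' = E_deriv[OF t]
  show "((\<lambda>s. X s \<bullet> X s - E s \<bullet> E s) has_real_derivative
      X t \<bullet> X' t + X' t \<bullet> X t - (E t \<bullet> E' t + E' t \<bullet> E t)) (at t)"
    using has_real_derivative_inner[OF X' X'] has_real_derivative_inner[OF E' E'] by (rule DERIV_diff)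
  show "((\<lambda>s. 2 * (X s \<bullet> E s)) has_real_derivative 2 * (X t \<bullet> E' t + X' t \<bullet> E t)) (at t)"
    using has_real_derivative_inner[OF X' E'] by (rule DERIV_cmult)
  show "\<forall>\<^sub>F s in nhds t. (X s \<bullet> X s - E s \<bullet> E s) * sin (\<theta> s) = 2 * (X s \<bullet> E s) * cos (\<theta> s)"
    using eventually_in_J[OF t] by (auto elim!: eventually_mono simp: polar)
qed

lemma angular_momentum_rates:
  assumes t: "t \<in> J"
    and Omega: "\<And>s. s \<in> J \<Longrightarrow> X s \<times> X' s + E s \<times> E' s = \<Omega>"
    and \<theta>': "(\<theta> has_real_derivative \<theta>') (at t)"
    and polar: "\<And>s. s \<in> J \<Longrightarrow> (X s \<bullet> X s - E s \<bullet> E s) * sin (\<theta> s) = 2 * (X s \<bullet> E s) * cos (\<theta> s)"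
  defines "lam1 \<equiv> second_moment (X t) (E t) (u2 t)" and "lam2 \<equiv> second_moment (X t) (E t) (u1 t)"
    and "I \<equiv> X t \<bullet> X t + E t \<bullet> E t" and "D \<equiv> n t \<bullet> (X t \<times> E t)"
  shows "((\<lambda>s. \<Omega> \<bullet> u1 s) has_real_derivative
      (\<Omega> \<bullet> u2 t) * ((1 / I - 1 / lam2) * (\<Omega> \<bullet> n t) + \<theta>' * D / I)) (at t)"
    "((\<lambda>s. \<Omega> \<bullet> u2 s) has_real_derivative
      (\<Omega> \<bullet> u1 t) * ((1 / lam1 - 1 / I) * (\<Omega> \<bullet> n t) - \<theta>' * D / I)) (at t)"
    "((\<lambda>s. \<Omega> \<bullet> n s) has_real_derivative (\<Omega> \<bullet> u1 t) * (\<Omega> \<bullet> u2 t) * (1 / lam2 - 1 / lam1)) (at t)"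
proof -
  obtain a b \<beta> where u1': "(u1 has_vector_derivative \<beta> *\<^sub>R u2 t - a *\<^sub>R n t) (at t)"
    and u2': "(u2 has_vector_derivative - \<beta> *\<^sub>R u1 t - b *\<^sub>R n t) (at t)"
    and n': "(n has_vector_derivative a *\<^sub>R u1 t + b *\<^sub>R u2 t) (at t)"
    using frame_angular_velocity[OF t] by blast
  have fr: "pos_orthonormal_frame (u1 t) (u2 t) (n t)"
    using frame t .
  define x1 y1 x2 y2 p1 q1 r1 p2 q2 r2 where coords:
    "x1 = X t \<bullet> u1 t" "y1 = X t \<bullet> u2 t" "x2 = E t \<bullet> u1 t" "y2 = E t \<bullet> u2 t"
    "p1 = X' t \<bullet> u1 t" "q1 = X' t \<bullet> u2 t" "r1 = X' t \<bullet> n t"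
    "p2 = E' t \<bullet> u1 t" "q2 = E' t \<bullet> u2 t" "r2 = E' t \<bullet> n t"
  have expand: "X t = x1 *\<^sub>R u1 t + y1 *\<^sub>R u2 t" "E t = x2 *\<^sub>R u1 t + y2 *\<^sub>R u2 t"
      "X' t = p1 *\<^sub>R u1 t + q1 *\<^sub>R u2 t + r1 *\<^sub>R n t" "E' t = p2 *\<^sub>R u1 t + q2 *\<^sub>R u2 t + r2 *\<^sub>R n t"
    using frame_expansion[OF fr, of "X t"] frame_expansion[OF fr, of "E t"] frame_expansion[OF fr, of "X' t"]
      frame_expansion[OF fr, of "E' t"] X_normal[OF t] E_normal[OF t]
    by (simp_all add: coords)
  note rates = constraint_rates[OF t u1' u2' n', folded coords]
  have polar_rate: "(x1\<^sup>2 + y1\<^sup>2 - (x2\<^sup>2 + y2\<^sup>2)) * (2 * (x1 * p2 + y1 * q2 + (p1 * x2 + q1 * y2)))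
        - 2 * (x1 * x2 + y1 * y2) * (2 * (x1 * p1 + y1 * q1) - 2 * (x2 * p2 + y2 * q2))
      = ((x1\<^sup>2 + y1\<^sup>2 - (x2\<^sup>2 + y2\<^sup>2))\<^sup>2 + (2 * (x1 * x2 + y1 * y2))\<^sup>2) * \<theta>'"
    using polar_rate[OF t \<theta>' polar] unfolding expand
    by (simp add: inner_add_left inner_add_right frame_inner[OF fr] algebra_simps power2_eq_square)
  have g: "\<Omega> \<bullet> u1 t = y1 * r1 + y2 * r2" "\<Omega> \<bullet> u2 t = - (x1 * r1 + x2 * r2)"
    "\<Omega> \<bullet> n t = x1 * q1 - y1 * p1 + (x2 * q2 - y2 * p2)"
    using frame_cross_coords[OF fr, of "X t" "X' t"] frame_cross_coords[OF fr, of "E t" "E' t"]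
      X_normal[OF t] E_normal[OF t]
    by (simp_all add: Omega[OF t, symmetric] inner_add_left coords)
  have coord_facts: "x1 * y1 + x2 * y2 = 0" "lam1 = y1\<^sup>2 + y2\<^sup>2" "lam2 = x1\<^sup>2 + x2\<^sup>2"
    "I = x1\<^sup>2 + x2\<^sup>2 + (y1\<^sup>2 + y2\<^sup>2)" "D = x1 * y2 - y1 * x2"
    using principal[OF t] planar_moment_sum[OF fr X_normal[OF t] E_normal[OF t]]
      frame_cross_coords(3)[OF fr, of "X t" "E t"]
    by (simp_all add: lam1_def lam2_def I_def D_def second_moment_def coords inner_commute)
  note alg = frame_rates_algebra[OF coord_facts(1) _ _ _ rates polar_rate, folded g coord_facts(2-5)]
  show "((\<lambda>s. \<Omega> \<bullet> u1 s) has_real_derivative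
      (\<Omega> \<bullet> u2 t) * ((1 / I - 1 / lam2) * (\<Omega> \<bullet> n t) + \<theta>' * D / I)) (at t)"
    "((\<lambda>s. \<Omega> \<bullet> u2 s) has_real_derivative
      (\<Omega> \<bullet> u1 t) * ((1 / lam1 - 1 / I) * (\<Omega> \<bullet> n t) - \<theta>' * D / I)) (at t)"
    "((\<lambda>s. \<Omega> \<bullet> n s) has_real_derivative (\<Omega> \<bullet> u1 t) * (\<Omega> \<bullet> u2 t) * (1 / lam2 - 1 / lam1)) (at t)"
    using frame_components_has_real_derivative[OF u1' u2' n', of \<Omega>] alg moment_pos[OF t]
      moments_distinct[OF t]
    by (simp_all add: lam1_def lam2_def)
qed

end

section \<open>Jacobi coordinates\<close>

lemma jac_eta_centred:
  assumes masses: "m1 > 0" "m2 > 0" "m1 + m2 + m3 = 1"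
    and com: "m1 *\<^sub>R a1 + m2 *\<^sub>R a2 + m3 *\<^sub>R a3 = 0"
  shows "jac_eta m1 m2 m3 a1 a2 a3 = (sqrt ((m1 + m2) * m3) / (m1 + m2)) *\<^sub>R a3"
proof -
  have "m1 *\<^sub>R a1 + m2 *\<^sub>R a2 = - m3 *\<^sub>R a3"
    using com by (simp add: eq_neg_iff_add_eq_0)
  moreover have "1 + m3 / (m1 + m2) = 1 / (m1 + m2)"
    using masses by (simp add: field_simps)
  ultimately have "a3 - (1 / (m1 + m2)) *\<^sub>R (m1 *\<^sub>R a1 + m2 *\<^sub>R a2) = (1 / (m1 + m2)) *\<^sub>R a3"
    by (metis (no_types, lifting) diff_minus_eq_add scaleR_add_left scaleR_minus_left scaleR_one
        scaleR_scaleR mult.commute times_divide_eq_right mult.right_neutral)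
  then show ?thesis
    by (simp add: jac_eta_def)
qed

lemma jacobi_bilinear_sum:
  fixes h :: "real^3 \<Rightarrow> real^3 \<Rightarrow> 'c::real_vector"
  assumes masses: "m1 > 0" "m2 > 0" "m3 > 0" "m1 + m2 + m3 = 1"
    and com: "m1 *\<^sub>R a1 + m2 *\<^sub>R a2 + m3 *\<^sub>R a3 = 0"
    and h: "bilinear h"
  shows "m1 *\<^sub>R h a1 b1 + m2 *\<^sub>R h a2 b2 + m3 *\<^sub>R h a3 b3 =
    h (jac_xi m1 m2 a1 a2) (jac_xi m1 m2 b1 b2) + h (jac_eta m1 m2 m3 a1 a2 a3) (jac_eta m1 m2 m3 b1 b2 b3)"
proof -
  define M where "M = m1 + m2"
  have M: "M > 0"
    using masses by (simp add: M_def)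
  have h_scale: "h (c *\<^sub>R x) (d *\<^sub>R y) = (c * d) *\<^sub>R h x y" for c d x y
    by (simp add: bilinear_lmul[OF h] bilinear_rmul[OF h])
  have xi: "h (jac_xi m1 m2 a1 a2) (jac_xi m1 m2 b1 b2) = (m1 * m2 / M) *\<^sub>R h (a2 - a1) (b2 - b1)"
    using masses by (simp add: jac_xi_def h_scale M_def)
  have eta: "h (jac_eta m1 m2 m3 a1 a2 a3) (jac_eta m1 m2 m3 b1 b2 b3)
      = m3 *\<^sub>R h a3 b3 - m3 *\<^sub>R h a3 ((1 / M) *\<^sub>R (m1 *\<^sub>R b1 + m2 *\<^sub>R b2))"
    using masses M
    unfolding jac_eta_centred[OF masses(1,2,4) com] jac_eta_def[of _ _ _ b1] M_def[symmetric] h_scale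
    by (simp add: bilinear_rsub[OF h] algebra_simps)
  have a3_left: "m3 *\<^sub>R h a3 y = - h (m1 *\<^sub>R a1 + m2 *\<^sub>R a2) y" for y
  proof -
    have "h (m1 *\<^sub>R a1 + m2 *\<^sub>R a2 + m3 *\<^sub>R a3) y = 0"
      using com by (simp add: bilinear_lzero[OF h])
    then show ?thesis
      by (simp add: bilinear_ladd[OF h] bilinear_lmul[OF h] eq_neg_iff_add_eq_0 algebra_simps)
  qed
  have eta': "m3 *\<^sub>R h a3 ((1 / M) *\<^sub>R (m1 *\<^sub>R b1 + m2 *\<^sub>R b2)) =
      - (1 / M) *\<^sub>R (m1 *\<^sub>R (m1 *\<^sub>R h a1 b1 + m2 *\<^sub>R h a2 b1) + m2 *\<^sub>R (m1 *\<^sub>R h a1 b2 + m2 *\<^sub>R h a2 b2))"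
    unfolding a3_left
    by (simp add: bilinear_ladd[OF h] bilinear_radd[OF h] bilinear_lmul[OF h] bilinear_rmul[OF h] algebra_simps)
  have "m1 = m1 * m2 / M + m1 * m1 / M" "m2 = m1 * m2 / M + m2 * m2 / M"
    using M by (simp_all add: M_def add_divide_distrib[symmetric] add.commute flip: distrib_left distrib_right)
  then have "m1 *\<^sub>R h a1 b1 + m2 *\<^sub>R h a2 b2
      = (m1 * m2 / M + m1 * m1 / M) *\<^sub>R h a1 b1 + (m1 * m2 / M + m2 * m2 / M) *\<^sub>R h a2 b2"
    by simp
  also have "\<dots> = (m1 * m2 / M) *\<^sub>R h (a2 - a1) (b2 - b1)
      + (1 / M) *\<^sub>R (m1 *\<^sub>R (m1 *\<^sub>R h a1 b1 + m2 *\<^sub>R h a2 b1) + m2 *\<^sub>R (m1 *\<^sub>R h a1 b2 + m2 *\<^sub>R h a2 b2))"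
    by (simp add: bilinear_lsub[OF h] bilinear_rsub[OF h] algebra_simps)
  finally show ?thesis
    unfolding xi eta eta' by (simp add: algebra_simps)
qed

lemma bilinear_inner_real3: "bilinear ((\<bullet>) :: real^3 \<Rightarrow> real^3 \<Rightarrow> real)"
  using bilinear_conv_bounded_bilinear bounded_bilinear_inner by blast

lemma bilinear_inner_product_pair: "bilinear (\<lambda>x y :: real^3. (u \<bullet> x) * (w \<bullet> y))"
  by (auto simp: bilinear_def linear_iff inner_add_right algebra_simps)

context
  fixes m1 m2 m3 :: real and a1 a2 a3 :: "real^3"
  assumes masses: "m1 > 0" "m2 > 0" "m3 > 0" "m1 + m2 + m3 = 1"
    and com: "m1 *\<^sub>R a1 + m2 *\<^sub>R a2 + m3 *\<^sub>R a3 = 0"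
begin

lemma moment_of_inertia_jacobi:
  "moment_of_inertia m1 m2 m3 a1 a2 a3 = jac_xi m1 m2 a1 a2 \<bullet> jac_xi m1 m2 a1 a2
    + jac_eta m1 m2 m3 a1 a2 a3 \<bullet> jac_eta m1 m2 m3 a1 a2 a3"
  using jacobi_bilinear_sum[OF masses com bilinear_inner_real3, of a1 a2 a3]
  by (simp add: moment_of_inertia_def power2_norm_eq_inner)

lemma inner_products_jacobi:
  "m1 * ((u \<bullet> a1) * (w \<bullet> a1)) + m2 * ((u \<bullet> a2) * (w \<bullet> a2)) + m3 * ((u \<bullet> a3) * (w \<bullet> a3))
    = (u \<bullet> jac_xi m1 m2 a1 a2) * (w \<bullet> jac_xi m1 m2 a1 a2)
      + (u \<bullet> jac_eta m1 m2 m3 a1 a2 a3) * (w \<bullet> jac_eta m1 m2 m3 a1 a2 a3)"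
  using jacobi_bilinear_sum[OF masses com bilinear_inner_product_pair, of u w a1 a2 a3] by simp

lemma inertia_tensor_jacobi:
  "inertia_tensor m1 m2 m3 a1 a2 a3 u w = (u \<bullet> w) * moment_of_inertia m1 m2 m3 a1 a2 a3
    - ((u \<bullet> jac_xi m1 m2 a1 a2) * (w \<bullet> jac_xi m1 m2 a1 a2)
      + (u \<bullet> jac_eta m1 m2 m3 a1 a2 a3) * (w \<bullet> jac_eta m1 m2 m3 a1 a2 a3))"
  unfolding inertia_tensor_def cross_inner_cross inner_products_jacobi[symmetric]
  by (simp add: moment_of_inertia_def power2_norm_eq_inner inner_commute algebra_simps)

lemma ang_mom_jacobi:
  "ang_mom m1 m2 m3 a1 a2 a3 v1 v2 v3 = jac_xi m1 m2 a1 a2 \<times> jac_xi m1 m2 v1 v2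
    + jac_eta m1 m2 m3 a1 a2 a3 \<times> jac_eta m1 m2 m3 v1 v2 v3"
  using jacobi_bilinear_sum[OF masses com bilinear_cross, of v1 v2 v3] by (simp add: ang_mom_def)

lemma second_moment_jacobi_pos:
  assumes "u \<in> span {a1, a2, a3}" "u \<noteq> 0"
  shows "0 < second_moment (jac_xi m1 m2 a1 a2) (jac_eta m1 m2 m3 a1 a2 a3) u"
proof -
  have "second_moment (jac_xi m1 m2 a1 a2) (jac_eta m1 m2 m3 a1 a2 a3) u
      = m1 * (u \<bullet> a1)\<^sup>2 + m2 * (u \<bullet> a2)\<^sup>2 + m3 * (u \<bullet> a3)\<^sup>2"
    using inner_products_jacobi[of u u] by (simp add: second_moment_def inner_commute power2_eq_square)
  moreover have "u \<bullet> a1 \<noteq> 0 \<or> u \<bullet> a2 \<noteq> 0 \<or> u \<bullet> a3 \<noteq> 0"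
  proof (rule ccontr)
    assume "\<not> ?thesis"
    then have "orthogonal u u"
      using orthogonal_to_span[OF assms(1), of u] by (auto simp: orthogonal_def)
    with assms(2) show False
      by (simp add: orthogonal_self)
  qed
  then have "0 < m1 * (u \<bullet> a1)\<^sup>2 \<or> 0 < m2 * (u \<bullet> a2)\<^sup>2 \<or> 0 < m3 * (u \<bullet> a3)\<^sup>2"
    using masses by auto
  moreover have "0 \<le> m1 * (u \<bullet> a1)\<^sup>2" "0 \<le> m2 * (u \<bullet> a2)\<^sup>2" "0 \<le> m3 * (u \<bullet> a3)\<^sup>2"
    using masses by simp_all
  ultimately show ?thesis
    by linarith
qed

end

lemma jacobi_normal:
  assumes "n \<bullet> a1 = 0" "n \<bullet> a2 = 0" "n \<bullet> a3 = 0"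
  shows "jac_xi m1 m2 a1 a2 \<bullet> n = 0" "jac_eta m1 m2 m3 a1 a2 a3 \<bullet> n = 0"
  using assms by (simp_all add: jac_xi_def jac_eta_def inner_commute inner_diff_right inner_add_right)

lemma jacobi_has_vector_derivative:
  assumes "(a1 has_vector_derivative v1) (at t)" "(a2 has_vector_derivative v2) (at t)"
    "(a3 has_vector_derivative v3) (at t)"
  shows "((\<lambda>s. jac_xi m1 m2 (a1 s) (a2 s)) has_vector_derivative jac_xi m1 m2 v1 v2) (at t)"
    "((\<lambda>s. jac_eta m1 m2 m3 (a1 s) (a2 s) (a3 s)) has_vector_derivative jac_eta m1 m2 m3 v1 v2 v3) (at t)"
  unfolding jac_xi_def jac_eta_def using assms by (auto intro!: derivative_eq_intros)

lemma eigenframe_jacobi: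
  assumes masses: "m1 > 0" "m2 > 0" "m3 > 0" "m1 + m2 + m3 = 1"
    and tri: "oriented_mtriangle m1 m2 m3 a1 a2 a3 n"
    and eig: "eigenframe m1 m2 m3 a1 a2 a3 u1 u2 n"
  defines "X \<equiv> jac_xi m1 m2 a1 a2" and "E \<equiv> jac_eta m1 m2 m3 a1 a2 a3"
  shows "pos_orthonormal_frame u1 u2 n" "X \<bullet> n = 0" "E \<bullet> n = 0"
    "(X \<bullet> u1) * (X \<bullet> u2) + (E \<bullet> u1) * (E \<bullet> u2) = 0"
    "0 < second_moment X E u1" "0 < second_moment X E u2"
    "inertia_tensor m1 m2 m3 a1 a2 a3 u1 u1 = second_moment X E u2"
    "inertia_tensor m1 m2 m3 a1 a2 a3 u2 u2 = second_moment X E u1"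
    "inertia_tensor m1 m2 m3 a1 a2 a3 n n = X \<bullet> X + E \<bullet> E"
proof -
  have com: "m1 *\<^sub>R a1 + m2 *\<^sub>R a2 + m3 *\<^sub>R a3 = 0"
    using tri by (simp add: oriented_mtriangle_def)
  show fr: "pos_orthonormal_frame u1 u2 n"
    using eig by (simp add: eigenframe_def pos_orthonormal_frame_def)
  show normal: "X \<bullet> n = 0" "E \<bullet> n = 0"
    using tri jacobi_normal unfolding X_def E_def oriented_mtriangle_def by blast+
  note B = inertia_tensor_jacobi[OF masses com, folded X_def E_def]
  note I = moment_of_inertia_jacobi[OF masses com, folded X_def E_def]
  obtain l where "is_eigvec (inertia_tensor m1 m2 m3 a1 a2 a3) u1 l"
    using eig by (auto simp: eigenframe_def)
  then have "inertia_tensor m1 m2 m3 a1 a2 a3 u1 u2 = 0"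
    using frame_inner(4)[OF fr] by (simp add: is_eigvec_def)
  then show "(X \<bullet> u1) * (X \<bullet> u2) + (E \<bullet> u1) * (E \<bullet> u2) = 0"
    using frame_inner(4)[OF fr] by (simp add: B inner_commute)
  show "0 < second_moment X E u1" "0 < second_moment X E u2"
    using eig second_moment_jacobi_pos[OF masses com] unfolding X_def E_def eigenframe_def
    by (metis norm_zero zero_neq_one)+
  show "inertia_tensor m1 m2 m3 a1 a2 a3 u1 u1 = second_moment X E u2"
    "inertia_tensor m1 m2 m3 a1 a2 a3 u2 u2 = second_moment X E u1"
    "inertia_tensor m1 m2 m3 a1 a2 a3 n n = X \<bullet> X + E \<bullet> E"
    using planar_moment_sum[OF fr normal] frame_inner[OF fr] normal
    by (simp_all add: B I second_moment_def inner_commute power2_eq_square)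
qed

lemma shape_coords_jacobi:
  assumes "shape_coords m1 m2 m3 a1 a2 a3 n \<phi> \<theta>"
  defines "X \<equiv> jac_xi m1 m2 a1 a2" and "E \<equiv> jac_eta m1 m2 m3 a1 a2 a3"
    and "I \<equiv> moment_of_inertia m1 m2 m3 a1 a2 a3"
  shows "2 * (n \<bullet> (X \<times> E)) = I * cos \<phi>"
    "(X \<bullet> X - E \<bullet> E) * sin \<theta> = 2 * (X \<bullet> E) * cos \<theta>"
    "(X \<bullet> X - E \<bullet> E)\<^sup>2 + (2 * (X \<bullet> E))\<^sup>2 = (I * sin \<phi>)\<^sup>2"
    "0 \<le> sin \<phi>"
proof -
  have coords: "0 \<le> \<phi>" "\<phi> \<le> pi" "2 * (n \<bullet> (X \<times> E)) = I * cos \<phi>"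
    "X \<bullet> X - E \<bullet> E = I * sin \<phi> * cos \<theta>" "2 * (X \<bullet> E) = I * sin \<phi> * sin \<theta>"
    using assms(1) by (simp_all add: shape_coords_def Let_def X_def E_def I_def)
  then show "2 * (n \<bullet> (X \<times> E)) = I * cos \<phi>" "(X \<bullet> X - E \<bullet> E) * sin \<theta> = 2 * (X \<bullet> E) * cos \<theta>"
    "0 \<le> sin \<phi>"
    by (simp_all add: sin_ge_zero)
  show "(X \<bullet> X - E \<bullet> E)\<^sup>2 + (2 * (X \<bullet> E))\<^sup>2 = (I * sin \<phi>)\<^sup>2"
    unfolding coords(4,5) using sin_cos_squared_add[of \<theta>] by algebra
qed

lemma pair_eq_from_sum_and_gap:
  fixes l1 l2 I s :: real
  assumes "l1 + l2 = I" "(l2 - l1)\<^sup>2 = (I * s)\<^sup>2" "0 \<le> I * s"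
  shows "{l1, l2} = {I / 2 * (1 + s), I / 2 * (1 - s)}"
proof -
  have "\<bar>l2 - l1\<bar> = I * s"
    using assms(2,3) by (metis abs_of_nonneg real_sqrt_abs)
  then consider "l2 - l1 = I * s" | "l1 - l2 = I * s"
    by linarith
  then show ?thesis
    using assms(1) by cases (auto simp: field_simps)
qed

lemma eigenframe_principal_moments:
  assumes masses: "m1 > 0" "m2 > 0" "m3 > 0" "m1 + m2 + m3 = 1"
    and tri: "oriented_mtriangle m1 m2 m3 a1 a2 a3 n"
    and eig: "eigenframe m1 m2 m3 a1 a2 a3 u1 u2 n"
    and coords: "shape_coords m1 m2 m3 a1 a2 a3 n \<phi> \<theta>"
  defines "I \<equiv> moment_of_inertia m1 m2 m3 a1 a2 a3"
  shows "0 < I" "inertia_tensor m1 m2 m3 a1 a2 a3 n n = I"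
    "{inertia_tensor m1 m2 m3 a1 a2 a3 u1 u1, inertia_tensor m1 m2 m3 a1 a2 a3 u2 u2}
      = {I / 2 * (1 + sin \<phi>), I / 2 * (1 - sin \<phi>)}"
proof -
  note static = eigenframe_jacobi[OF masses tri eig]
  have "m1 *\<^sub>R a1 + m2 *\<^sub>R a2 + m3 *\<^sub>R a3 = 0"
    using tri by (simp add: oriented_mtriangle_def)
  note I_jacobi = moment_of_inertia_jacobi[OF masses this, folded I_def]
  note moment_sum = planar_moment_sum[OF static(1-3), folded I_jacobi]
  show "0 < I"
    using moment_sum static(5,6) by simp
  show "inertia_tensor m1 m2 m3 a1 a2 a3 n n = I"
    using static(9) I_jacobi by simp
  show "{inertia_tensor m1 m2 m3 a1 a2 a3 u1 u1, inertia_tensor m1 m2 m3 a1 a2 a3 u2 u2}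
      = {I / 2 * (1 + sin \<phi>), I / 2 * (1 - sin \<phi>)}"
    using static(7,8) moment_sum planar_moment_gap_sq[OF static(1-4)] I_jacobi \<open>0 < I\<close>
      shape_coords_jacobi(3,4)[OF coords, folded I_def]
    by (intro pair_eq_from_sum_and_gap) simp_all
qed

lemma principal_frame_motion_jacobi:
  assumes masses: "m1 > 0" "m2 > 0" "m3 > 0" "m1 + m2 + m3 = 1"
    and "open J"
    and motion: "\<And>s. s \<in> J \<Longrightarrow> (a1 has_vector_derivative v1 s) (at s)"
      "\<And>s. s \<in> J \<Longrightarrow> (a2 has_vector_derivative v2 s) (at s)"
      "\<And>s. s \<in> J \<Longrightarrow> (a3 has_vector_derivative v3 s) (at s)"
    and tri: "\<And>s. s \<in> J \<Longrightarrow> oriented_mtriangle m1 m2 m3 (a1 s) (a2 s) (a3 s) (n s)"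
    and eig: "\<And>s. s \<in> J \<Longrightarrow> eigenframe m1 m2 m3 (a1 s) (a2 s) (a3 s) (u1 s) (u2 s) (n s)"
    and "continuous_on J u1" "continuous_on J n"
    and coords: "\<And>s. s \<in> J \<Longrightarrow> shape_coords m1 m2 m3 (a1 s) (a2 s) (a3 s) (n s) (\<phi> s) (\<theta> s)"
    and not_pole: "\<And>s. s \<in> J \<Longrightarrow> sin (\<phi> s) \<noteq> 0"
  shows "principal_frame_motion J (\<lambda>s. jac_xi m1 m2 (a1 s) (a2 s)) (\<lambda>s. jac_eta m1 m2 m3 (a1 s) (a2 s) (a3 s))
    (\<lambda>s. jac_xi m1 m2 (v1 s) (v2 s)) (\<lambda>s. jac_eta m1 m2 m3 (v1 s) (v2 s) (v3 s)) u1 u2 n"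
proof
  fix s assume s: "s \<in> J"
  note static = eigenframe_jacobi[OF masses tri[OF s] eig[OF s]]
  show "((\<lambda>s. jac_xi m1 m2 (a1 s) (a2 s)) has_vector_derivative jac_xi m1 m2 (v1 s) (v2 s)) (at s)"
    "((\<lambda>s. jac_eta m1 m2 m3 (a1 s) (a2 s) (a3 s)) has_vector_derivative jac_eta m1 m2 m3 (v1 s) (v2 s) (v3 s)) (at s)"
    using jacobi_has_vector_derivative[OF motion[OF s]] by simp_all
  note moments = eigenframe_principal_moments[OF masses tri[OF s] eig[OF s] coords[OF s]]
  show "second_moment (jac_xi m1 m2 (a1 s) (a2 s)) (jac_eta m1 m2 m3 (a1 s) (a2 s) (a3 s)) (u1 s)
      \<noteq> second_moment (jac_xi m1 m2 (a1 s) (a2 s)) (jac_eta m1 m2 m3 (a1 s) (a2 s) (a3 s)) (u2 s)"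
    using moments(1,3) static(7,8) not_pole[OF s] by (auto simp: doubleton_eq_iff)
qed (use assms eigenframe_jacobi[OF masses tri eig] in auto)

theorem theoremD:
  fixes m1 m2 m3 :: real
    and a1 a2 a3 v1 v2 v3 u1 u2 n :: "real \<Rightarrow> real^3"
    and \<Omega> :: "real^3"
    and \<phi> \<theta> \<theta>' :: "real \<Rightarrow> real"
    and J :: "real set" and t :: real
  assumes masses: "m1 > 0" "m2 > 0" "m3 > 0" "m1 + m2 + m3 = 1"
    and J: "open J" "t \<in> J"
    and motion: "\<And>s. s \<in> J \<Longrightarrow> (a1 has_vector_derivative v1 s) (at s)"
                "\<And>s. s \<in> J \<Longrightarrow> (a2 has_vector_derivative v2 s) (at s)"
                "\<And>s. s \<in> J \<Longrightarrow> (a3 has_vector_derivative v3 s) (at s)"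
    and tri: "\<And>s. s \<in> J \<Longrightarrow> oriented_mtriangle m1 m2 m3 (a1 s) (a2 s) (a3 s) (n s)"
    and nondeg: "\<And>s. s \<in> J \<Longrightarrow> nondegenerate (a1 s) (a2 s) (a3 s)"
    and const_Omega: "\<And>s. s \<in> J \<Longrightarrow>
           ang_mom m1 m2 m3 (a1 s) (a2 s) (a3 s) (v1 s) (v2 s) (v3 s) = \<Omega>"
    and frame: "\<And>s. s \<in> J \<Longrightarrow> eigenframe m1 m2 m3 (a1 s) (a2 s) (a3 s) (u1 s) (u2 s) (n s)"
    and frame_cont: "continuous_on J u1" "continuous_on J u2" "continuous_on J n"
    and coords: "\<And>s. s \<in> J \<Longrightarrow> shape_coords m1 m2 m3 (a1 s) (a2 s) (a3 s) (n s) (\<phi> s) (\<theta> s)"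
    and not_pole: "\<And>s. s \<in> J \<Longrightarrow> sin (\<phi> s) \<noteq> 0"
    and theta_deriv: "\<And>s. s \<in> J \<Longrightarrow> (\<theta> has_real_derivative \<theta>' s) (at s)"
  defines "g1 \<equiv> \<lambda>s. \<Omega> \<bullet> u1 s"
    and "g2 \<equiv> \<lambda>s. \<Omega> \<bullet> u2 s"
    and "g3 \<equiv> \<lambda>s. \<Omega> \<bullet> n s"
    and "lam1 \<equiv> \<lambda>s. inertia_tensor m1 m2 m3 (a1 s) (a2 s) (a3 s) (u1 s) (u1 s)"
    and "lam2 \<equiv> \<lambda>s. inertia_tensor m1 m2 m3 (a1 s) (a2 s) (a3 s) (u2 s) (u2 s)"
    and "lam3 \<equiv> \<lambda>s. inertia_tensor m1 m2 m3 (a1 s) (a2 s) (a3 s) (n s) (n s)"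
    and "\<rho> \<equiv> \<lambda>s. sqrt (moment_of_inertia m1 m2 m3 (a1 s) (a2 s) (a3 s))"
  shows "(g1 has_real_derivative
            g2 t * ((1 / lam3 t - 1 / lam2 t) * g3 t + 1/2 * \<theta>' t * cos (\<phi> t))) (at t) \<and>
         (g2 has_real_derivative
            g1 t * ((1 / lam1 t - 1 / lam3 t) * g3 t - 1/2 * \<theta>' t * cos (\<phi> t))) (at t) \<and>
         (g3 has_real_derivative g1 t * g2 t * (1 / lam2 t - 1 / lam1 t)) (at t) \<and>
         {lam1 t, lam2 t} = {(\<rho> t)\<^sup>2 / 2 * (1 + sin (\<phi> t)), (\<rho> t)\<^sup>2 / 2 * (1 - sin (\<phi> t))} \<and>
         lam3 t = (\<rho> t)\<^sup>2"
proof -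
  define X E X' E' where "X s = jac_xi m1 m2 (a1 s) (a2 s)" "E s = jac_eta m1 m2 m3 (a1 s) (a2 s) (a3 s)"
    "X' s = jac_xi m1 m2 (v1 s) (v2 s)" "E' s = jac_eta m1 m2 m3 (v1 s) (v2 s) (v3 s)" for s
  note static = eigenframe_jacobi[OF masses tri[OF J(2)] frame[OF J(2)], folded X_E_X'_E'_def]
  note moments = eigenframe_principal_moments[OF masses tri[OF J(2)] frame[OF J(2)] coords[OF J(2)]]
  interpret principal_frame_motion J X E X' E' u1 u2 n
    unfolding X_E_X'_E'_def[abs_def]
    using principal_frame_motion_jacobi[OF masses J(1) motion tri frame frame_cont(1,3) coords not_pole] .
  have Omega: "X s \<times> X' s + E s \<times> E' s = \<Omega>" if "s \<in> J" for s
    using ang_mom_jacobi[OF masses, of "a1 s" "a2 s" "a3 s"] tri[OF that] const_Omega[OF that]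
    by (simp add: X_E_X'_E'_def oriented_mtriangle_def)
  have polar: "(X s \<bullet> X s - E s \<bullet> E s) * sin (\<theta> s) = 2 * (X s \<bullet> E s) * cos (\<theta> s)" if "s \<in> J" for s
    using shape_coords_jacobi(2)[OF coords[OF that]] by (simp add: X_E_X'_E'_def)
  have I: "moment_of_inertia m1 m2 m3 (a1 t) (a2 t) (a3 t) = X t \<bullet> X t + E t \<bullet> E t"
    using static(9) moments(2) by simp
  have "\<theta>' t * (n t \<bullet> (X t \<times> E t)) / (X t \<bullet> X t + E t \<bullet> E t) = 1 / 2 * \<theta>' t * cos (\<phi> t)"
    using moments(1) shape_coords_jacobi(1)[OF coords[OF J(2)], folded X_E_X'_E'_def] I
    by (simp add: field_simps)
  note rates = angular_momentum_rates[OF J(2) Omega theta_deriv[OF J(2)] polar, unfolded this]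
  have "(\<rho> t)\<^sup>2 = moment_of_inertia m1 m2 m3 (a1 t) (a2 t) (a3 t)"
    using moments(1) by (simp add: \<rho>_def)
  then show ?thesis
    using rates moments static(7-9) I by (simp add: g1_def g2_def g3_def lam1_def lam2_def lam3_def)
qed

end
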